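(* In the setting where $X_1,\dots,X_n$ are i.i.d. from $p\in\Delta([k])$, $b_1,\dots,b_n$ are the $\varepsilon$-RAPPOR outputs, $N_x=\sum_{j=1}^n\mathbf 1\{b_{jx}=1\}$, $\lambda=\alpha_R/k+\beta_R$ and $T=\sum_{x\in[k]}\big((N_x-(n-1)\lambda)^2-N_x\big)+k(n-1)\lambda^2$, we have $$\mathrm{Var}[T]\le 4kn^2+8n^3\alpha_R^2\|p-u\|_2^2.$$
   Context: $\Delta([k])$ is the set of probability distributions on $[k]=\{1,\dots,k\}$, $u$ the uniform distribution on $[k]$. The $\varepsilon$-RAPPOR mechanism ($\varepsilon>0$) maps $x\in[k]$ to a random vector $b\in\{0,1\}^k$ obtained from the one-hot vector $e_x$ by flipping each coordinate independently with probability $\beta_R=1/(e^{\varepsilon/2}+1)$; the mechanism is applied independently for each user. Set $\alpha_R=(e^{\varepsilon/2}-1)/(e^{\varepsilon/2}+1)$. *)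

theory Defs
  imports "HOL-Probability.Probability"
begin

text \<open>Users are indexed by 1..n, categories (the domain [k]) by 1..k.
A distribution p on [k] is a pmf on nat with support contained in {1..k}.\<close>

definition beta_R :: "real \<Rightarrow> real" where
  "beta_R \<epsilon> = 1 / (exp (\<epsilon> / 2) + 1)"

definition alpha_R :: "real \<Rightarrow> real" where
  "alpha_R \<epsilon> = (exp (\<epsilon> / 2) - 1) / (exp (\<epsilon> / 2) + 1)"

text \<open>epsilon-RAPPOR on input x: the one-hot vector e_x in {0,1}^k (true = 1),
each coordinate flipped independently with probability beta_R.\<close>
definition rappor :: "real \<Rightarrow> nat \<Rightarrow> nat \<Rightarrow> (nat \<Rightarrow> bool) pmf" where
  "rappor \<epsilon> k x =
     Pi_pmf {1..k} False (\<lambda>y. map_pmf (\<lambda>flip. (y = x) \<noteq> flip) (bernoulli_pmf (beta_R \<epsilon>)))"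

text \<open>Joint distribution of the outputs b_1..b_n: each user j draws X_j from p
independently and applies RAPPOR independently; b j y is the y-th bit of b_j.\<close>
definition rappor_outputs :: "real \<Rightarrow> nat \<Rightarrow> nat \<Rightarrow> nat pmf \<Rightarrow> (nat \<Rightarrow> nat \<Rightarrow> bool) pmf" where
  "rappor_outputs \<epsilon> k n p = Pi_pmf {1..n} (\<lambda>_. False) (\<lambda>j. bind_pmf p (rappor \<epsilon> k))"

definition N_count :: "nat \<Rightarrow> (nat \<Rightarrow> nat \<Rightarrow> bool) \<Rightarrow> nat \<Rightarrow> real" where
  "N_count n b x = real (card {j \<in> {1..n}. b j x})"

definition lam_R :: "real \<Rightarrow> nat \<Rightarrow> real" where
  "lam_R \<epsilon> k = alpha_R \<epsilon> / real k + beta_R \<epsilon>"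

definition T_stat :: "real \<Rightarrow> nat \<Rightarrow> nat \<Rightarrow> (nat \<Rightarrow> nat \<Rightarrow> bool) \<Rightarrow> real" where
  "T_stat \<epsilon> k n b =
     (\<Sum>x\<in>{1..k}. (N_count n b x - (real n - 1) * lam_R \<epsilon> k)^2 - N_count n b x)
     + real k * (real n - 1) * (lam_R \<epsilon> k)^2"

end

theory Submission
  imports Defs
begin

text \<open>Let \<open>q x = \<beta> + \<alpha> p x\<close> (\<open>rappor_bit_prob\<close>) be the probability that a user's
  bit \<open>x\<close> is set, and \<open>Z i x = [b i x] - q x\<close>. Expanding \<open>N x\<close> around \<open>n q x\<close> and using
  \<open>[b]\<^sup>2 = [b]\<close>, the statistic \<open>T\<close> is a constant plus a linear part
  \<open>2 (n - 1) \<Sum>i x. (q x - \<lambda>) Z i x\<close> and a pair part \<open>\<Sum>i \<noteq> j. \<Sum>x. Z i x Z j x\<close>.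
  Users are independent and the \<open>Z\<close> are centred, so the two parts are uncorrelated and
  \<open>Var T = 4 (n - 1)\<^sup>2 n \<mu>\<^sup>T C \<mu> + 2 n (n - 1) \<Sum>x y. C x y\<^sup>2\<close>, where \<open>\<mu> = q - \<lambda> = \<alpha> (p - u)\<close>
  and \<open>C = diag (q (1 - q)) - \<alpha>\<^sup>2 p p\<^sup>T\<close> (\<open>rappor_cov\<close>) is the covariance matrix of one output.
  Finally \<open>\<mu>\<^sup>T C \<mu> \<le> 2 |\<mu>|\<^sup>2\<close> and \<open>\<Sum>x y. C x y\<^sup>2 \<le> k + 1\<close>.\<close>

section \<open>Products of probability mass functions\<close>

lemma finite_set_Pi_pmf:
  assumes "finite A" "\<And>i. i \<in> A \<Longrightarrow> finite (set_pmf (P i))"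
  shows "finite (set_pmf (Pi_pmf A d P))"
  using assms by (subst set_Pi_pmf) (auto intro!: finite_PiE_dflt)

lemma expectation_Pi_pmf_component:
  fixes f :: "'b \<Rightarrow> real"
  assumes "finite A" "a \<in> A"
  shows "measure_pmf.expectation (Pi_pmf A d P) (\<lambda>b. f (b a)) = measure_pmf.expectation (P a) f"
proof -
  have "map_pmf (\<lambda>b. b a) (Pi_pmf A d P) = P a"
    using assms by (simp add: Pi_pmf_component)
  then show ?thesis
    by (metis integral_map_pmf)
qed

lemma expectation_pair_pmf_mult:
  fixes f :: "'a \<Rightarrow> real" and g :: "'b \<Rightarrow> real"
  assumes "finite (set_pmf P)" "finite (set_pmf Q)"
  shows "measure_pmf.expectation (pair_pmf P Q) (\<lambda>z. f (fst z) * g (snd z))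
       = measure_pmf.expectation P f * measure_pmf.expectation Q g"
proof -
  have "measure_pmf.expectation (pair_pmf P Q) (\<lambda>z. f (fst z) * g (snd z))
     = (\<Sum>z\<in>set_pmf P \<times> set_pmf Q. pmf (pair_pmf P Q) z *\<^sub>R (f (fst z) * g (snd z)))"
    using assms by (intro integral_measure_pmf) auto
  also have "\<dots> = (\<Sum>a\<in>set_pmf P. pmf P a * f a) * (\<Sum>b\<in>set_pmf Q. pmf Q b * g b)"
    unfolding sum.cartesian_product sum_product by (intro sum.cong) (auto simp: pmf_pair)
  also have "\<dots> = measure_pmf.expectation P f * measure_pmf.expectation Q g"
    using assms by (simp add: integral_measure_pmf[of "set_pmf P"] integral_measure_pmf[of "set_pmf Q"])
  finally show ?thesis .
qed

lemma expectation_Pi_pmf_mult_indep: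
  fixes f :: "'b \<Rightarrow> real" and F :: "('a \<Rightarrow> 'b) \<Rightarrow> real"
  assumes "finite A" "\<And>i. i \<in> A \<Longrightarrow> finite (set_pmf (P i))" "a \<in> A"
    and F: "\<And>b c. F (b(a := c)) = F b"
  shows "measure_pmf.expectation (Pi_pmf A d P) (\<lambda>b. f (b a) * F b)
       = measure_pmf.expectation (P a) f * measure_pmf.expectation (Pi_pmf A d P) F"
proof -
  let ?R = "Pi_pmf (A - {a}) d P"
  have split: "Pi_pmf A d P = map_pmf (\<lambda>(y, g). g(a := y)) (pair_pmf (P a) ?R)"
    using assms Pi_pmf_insert[of "A - {a}" a d P] by (simp add: insert_absorb)
  have "measure_pmf.expectation (Pi_pmf A d P) (\<lambda>b. f (b a) * F b)
      = measure_pmf.expectation (pair_pmf (P a) ?R) (\<lambda>z. f (fst z) * F (snd z))"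
    unfolding split by (simp add: case_prod_unfold F)
  also have "\<dots> = measure_pmf.expectation (P a) f * measure_pmf.expectation ?R F"
    using assms by (intro expectation_pair_pmf_mult finite_set_Pi_pmf) auto
  also have "measure_pmf.expectation ?R F = measure_pmf.expectation (Pi_pmf A d P) F"
    unfolding split by (simp add: case_prod_unfold F)
  finally show ?thesis .
qed

section \<open>Moments of statistics of independent samples\<close>

lemma sum_off_diagonal_doubleton:
  fixes s :: real
  assumes "finite I" "i \<in> I" "j \<in> I" "i \<noteq> j"
  shows "(\<Sum>k\<in>I. \<Sum>l\<in>I - {k}. if {k, l} = {i, j} then s else 0) = 2 * s"
proof -
  have "(\<Sum>l\<in>I - {k}. if {k, l} = {i, j} then s else 0)
      = (if k = i then s else 0) + (if k = j then s else 0)" for k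
    using assms by (auto simp: doubleton_eq_iff if_distrib[of "\<lambda>P. if P then s else 0"] sum.delta
        cong: if_cong)
  then show ?thesis
    using assms by (simp add: sum.distrib)
qed

lemma sum_off_diagonal_const:
  fixes c :: real
  assumes "finite I"
  shows "(\<Sum>i\<in>I. \<Sum>j\<in>I - {i}. c) = real (card I) * (real (card I) - 1) * c"
proof -
  have "real (card (I - {i})) = real (card I) - 1" if "i \<in> I" for i
  proof -
    have "card I \<ge> 1"
      using assms that by (metis Suc_leI card_gt_0_iff empty_iff One_nat_def)
    then show ?thesis
      using assms that by (simp add: card_Diff_singleton of_nat_diff)
  qed
  then show ?thesis
    by simp
qed

lemma sum_off_diagonal_products:
  fixes f :: "'a \<Rightarrow> real"
  assumes "finite I"
  shows "(\<Sum>i\<in>I. \<Sum>j\<in>I - {i}. f i * f j) = (\<Sum>i\<in>I. f i)^2 - (\<Sum>i\<in>I. (f i)^2)"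
proof -
  have "(\<Sum>i\<in>I. \<Sum>j\<in>I - {i}. f i * f j) = (\<Sum>i\<in>I. f i * ((\<Sum>j\<in>I. f j) - f i))"
    using assms by (intro sum.cong refl) (simp add: sum_distrib_left[symmetric] sum_diff1)
  also have "\<dots> = (\<Sum>i\<in>I. f i)^2 - (\<Sum>i\<in>I. (f i)^2)"
    by (simp add: algebra_simps sum_subtractf sum_distrib_right[symmetric] power2_eq_square)
  finally show ?thesis .
qed

lemma indicator_sum_sq_expansion:
  fixes d :: "'a \<Rightarrow> real"
  assumes "finite I" and "\<And>i. i \<in> I \<Longrightarrow> d i * d i = d i"
  defines "m \<equiv> real (card I)"
  shows "((\<Sum>i\<in>I. d i) - (m - 1) * l)^2 - (\<Sum>i\<in>I. d i) + (m - 1) * l^2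
     = 2 * (m - 1) * (q - l) * (\<Sum>i\<in>I. d i - q)
       + (\<Sum>i\<in>I. \<Sum>j\<in>I - {i}. (d i - q) * (d j - q))
       + m * (m - 1) * (q - l)^2"
proof -
  define N where "N = (\<Sum>i\<in>I. d i)"
  have lin: "(\<Sum>i\<in>I. d i - q) = N - m * q"
    by (simp add: N_def m_def sum_subtractf)
  have "(\<Sum>i\<in>I. (d i - q)^2) = (\<Sum>i\<in>I. d i - 2 * q * d i + q^2)"
    using assms(2) by (intro sum.cong refl) (simp add: power2_eq_square algebra_simps)
  also have "\<dots> = N - 2 * q * N + m * q^2"
    by (simp add: N_def m_def sum.distrib sum_subtractf sum_distrib_left)
  finally have "(\<Sum>i\<in>I. \<Sum>j\<in>I - {i}. (d i - q) * (d j - q)) = (N - m * q)^2 - (N - 2 * q * N + m * q^2)"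
    using sum_off_diagonal_products[OF assms(1), of "\<lambda>i. d i - q"] lin by simp
  then show ?thesis
    unfolding lin N_def[symmetric] by (simp add: power2_eq_square algebra_simps)
qed

locale iid_features =
  fixes D :: "'b pmf" and I :: "'a set" and dflt :: 'b and K :: "'c set"
    and f :: "'b \<Rightarrow> 'c \<Rightarrow> real"
  assumes finite_I: "finite I" and finite_D: "finite (set_pmf D)"
begin

abbreviation sample :: "('a \<Rightarrow> 'b) pmf" where
  "sample \<equiv> Pi_pmf I dflt (\<lambda>_. D)"

definition mean :: "'c \<Rightarrow> real" where
  "mean x = measure_pmf.expectation D (\<lambda>u. f u x)"

definition centered :: "'b \<Rightarrow> 'c \<Rightarrow> real" where
  "centered u x = f u x - mean x"

definition cov :: "'c \<Rightarrow> 'c \<Rightarrow> real" where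
  "cov x y = measure_pmf.expectation D (\<lambda>u. centered u x * centered u y)"

definition lin_stat :: "('c \<Rightarrow> real) \<Rightarrow> ('a \<Rightarrow> 'b) \<Rightarrow> real" where
  "lin_stat \<mu> b = (\<Sum>i\<in>I. \<Sum>x\<in>K. \<mu> x * centered (b i) x)"

definition pair_stat :: "('a \<Rightarrow> 'b) \<Rightarrow> real" where
  "pair_stat b = (\<Sum>i\<in>I. \<Sum>j\<in>I - {i}. \<Sum>x\<in>K. centered (b i) x * centered (b j) x)"

lemma integrable_D [simp]: "integrable (measure_pmf D) (g :: 'b \<Rightarrow> real)"
  using finite_D by (rule integrable_measure_pmf_finite)

lemma integrable_sample [simp]: "integrable (measure_pmf sample) (g :: _ \<Rightarrow> real)"
  using finite_I finite_D by (intro integrable_measure_pmf_finite finite_set_Pi_pmf)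

lemma expectation_centered: "measure_pmf.expectation D (\<lambda>u. centered u x) = 0"
  by (simp add: centered_def mean_def)

lemma expectation_sample_indep:
  fixes g :: "'b \<Rightarrow> real" and F :: "('a \<Rightarrow> 'b) \<Rightarrow> real"
  assumes "i \<in> I" "\<And>b c. F (b(i := c)) = F b"
  shows "measure_pmf.expectation sample (\<lambda>b. g (b i) * F b)
       = measure_pmf.expectation D g * measure_pmf.expectation sample F"
  using assms finite_I finite_D by (intro expectation_Pi_pmf_mult_indep) auto

lemma expectation_sample_component:
  fixes g :: "'b \<Rightarrow> real"
  assumes "i \<in> I"
  shows "measure_pmf.expectation sample (\<lambda>b. g (b i)) = measure_pmf.expectation D g"
  using finite_I assms by (rule expectation_Pi_pmf_component)

lemma expectation_sample_centered:
  "i \<in> I \<Longrightarrow> measure_pmf.expectation sample (\<lambda>b. centered (b i) x) = 0"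
  using expectation_sample_component[of i "\<lambda>u. centered u x"] by (simp add: expectation_centered)

lemma expectation_sample_centered_pair:
  assumes "i \<in> I" "j \<in> I"
  shows "measure_pmf.expectation sample (\<lambda>b. centered (b i) x * centered (b j) y)
       = (if i = j then cov x y else 0)"
proof (cases "i = j")
  case True
  then show ?thesis
    using assms expectation_sample_component[of i "\<lambda>u. centered u x * centered u y"]
    by (simp add: cov_def)
next
  case False
  then show ?thesis
    using expectation_sample_indep[OF assms(1), of "\<lambda>b. centered (b j) y" "\<lambda>u. centered u x"]
    by (simp add: expectation_centered)
qed

lemma expectation_sample_centered_triple:
  assumes "i \<in> I" "j \<in> I" "l \<in> I" "j \<noteq> l"
  shows "measure_pmf.expectation sample
           (\<lambda>b. centered (b i) y * (centered (b j) x * centered (b l) x)) = 0"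
proof -
  consider "i \<noteq> j" "i \<noteq> l" | "i = j" | "i = l" by blast
  then show ?thesis
  proof cases
    case 1
    then show ?thesis
      using expectation_sample_indep[OF assms(1),
          of "\<lambda>b. centered (b j) x * centered (b l) x" "\<lambda>u. centered u y"]
      by (simp add: expectation_centered)
  next
    case 2
    have "(\<lambda>b. centered (b i) y * (centered (b j) x * centered (b l) x))
        = (\<lambda>b. centered (b l) x * (centered (b i) y * centered (b i) x))"
      using 2 by (auto simp: fun_eq_iff)
    then show ?thesis
      using 2 assms expectation_sample_indep[OF assms(3),
          of "\<lambda>b. centered (b i) y * centered (b i) x" "\<lambda>u. centered u x"]
      by (simp add: expectation_centered)
  next
    case 3
    have "(\<lambda>b. centered (b i) y * (centered (b j) x * centered (b l) x))
        = (\<lambda>b. centered (b j) x * (centered (b i) y * centered (b i) x))"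
      using 3 by (auto simp: fun_eq_iff)
    then show ?thesis
      using 3 assms expectation_sample_indep[OF assms(2),
          of "\<lambda>b. centered (b i) y * centered (b i) x" "\<lambda>u. centered u x"]
      by (simp add: expectation_centered)
  qed
qed

lemma expectation_sample_centered_quadruple:
  assumes "i \<in> I" "j \<in> I" "k \<in> I" "l \<in> I" "i \<noteq> j" "k \<noteq> l"
  shows "measure_pmf.expectation sample
           (\<lambda>b. (centered (b i) x * centered (b j) x) * (centered (b k) y * centered (b l) y))
       = (if {k, l} = {i, j} then (cov x y)^2 else 0)"
proof -
  consider "i \<notin> {k, l}" | "j \<notin> {k, l}" | "{k, l} = {i, j}"
    using assms by blast
  then show ?thesis
  proof cases
    case 1
    then show ?thesis
      using assms expectation_sample_indep[OF assms(1),
          of "\<lambda>b. centered (b j) x * (centered (b k) y * centered (b l) y)" "\<lambda>u. centered u x"]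
      by (auto simp: expectation_centered mult.assoc)
  next
    case 2
    have "(\<lambda>b. (centered (b i) x * centered (b j) x) * (centered (b k) y * centered (b l) y))
        = (\<lambda>b. centered (b j) x * (centered (b i) x * (centered (b k) y * centered (b l) y)))"
      by (auto simp: fun_eq_iff)
    then show ?thesis
      using 2 assms expectation_sample_indep[OF assms(2),
          of "\<lambda>b. centered (b i) x * (centered (b k) y * centered (b l) y)" "\<lambda>u. centered u x"]
      by (auto simp: expectation_centered)
  next
    case 3
    then have "(\<lambda>b. (centered (b i) x * centered (b j) x) * (centered (b k) y * centered (b l) y))
        = (\<lambda>b. (centered (b j) x * centered (b j) y) * (centered (b i) x * centered (b i) y))"
      by (auto simp: fun_eq_iff doubleton_eq_iff)
    then show ?thesis
      using 3 assms expectation_sample_indep[OF assms(2),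
          of "\<lambda>b. centered (b i) x * centered (b i) y" "\<lambda>u. centered u x * centered u y"]
        expectation_sample_centered_pair[OF assms(1,1), of x y]
      by (simp add: cov_def power2_eq_square)
  qed
qed

lemma expectation_lin_stat: "measure_pmf.expectation sample (lin_stat \<mu>) = 0"
  unfolding lin_stat_def by (simp add: Bochner_Integration.integral_sum expectation_sample_centered)

lemma expectation_pair_stat: "measure_pmf.expectation sample pair_stat = 0"
  unfolding pair_stat_def
  by (auto simp: Bochner_Integration.integral_sum expectation_sample_centered_pair intro!: sum.neutral)

lemma expectation_lin_stat_sq:
  "measure_pmf.expectation sample (\<lambda>b. lin_stat \<mu> b * lin_stat \<mu> b)
     = real (card I) * (\<Sum>x\<in>K. \<Sum>y\<in>K. \<mu> x * \<mu> y * cov x y)"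
proof -
  have "measure_pmf.expectation sample (\<lambda>b. lin_stat \<mu> b * lin_stat \<mu> b)
     = (\<Sum>i\<in>I. \<Sum>j\<in>I. \<Sum>x\<in>K. \<Sum>y\<in>K. \<mu> x * \<mu> y *
          measure_pmf.expectation sample (\<lambda>b. centered (b i) x * centered (b j) y))"
    unfolding lin_stat_def sum_product
    by (simp add: Bochner_Integration.integral_sum mult_ac sum.swap[of _ K I])
  also have "\<dots> = (\<Sum>i\<in>I. \<Sum>j\<in>I. if i = j then \<Sum>x\<in>K. \<Sum>y\<in>K. \<mu> x * \<mu> y * cov x y else 0)"
    by (intro sum.cong refl) (simp add: expectation_sample_centered_pair)
  finally show ?thesis
    using finite_I by simp
qed

lemma expectation_lin_pair_stat:
  "measure_pmf.expectation sample (\<lambda>b. lin_stat \<mu> b * pair_stat b) = 0"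
proof -
  have "measure_pmf.expectation sample (\<lambda>b. lin_stat \<mu> b * pair_stat b)
     = (\<Sum>i\<in>I. \<Sum>y\<in>K. \<Sum>j\<in>I. \<Sum>l\<in>I - {j}. \<Sum>x\<in>K. \<mu> y *
          measure_pmf.expectation sample
            (\<lambda>b. centered (b i) y * (centered (b j) x * centered (b l) x)))"
    unfolding lin_stat_def pair_stat_def sum_distrib_right
    unfolding sum_distrib_left by (simp add: Bochner_Integration.integral_sum mult.assoc)
  also have "\<dots> = 0"
    by (intro sum.neutral ballI) (auto simp: expectation_sample_centered_triple)
  finally show ?thesis .
qed

lemma expectation_pair_stat_sq:
  "measure_pmf.expectation sample (\<lambda>b. pair_stat b * pair_stat b)
     = 2 * real (card I) * (real (card I) - 1) * (\<Sum>x\<in>K. \<Sum>y\<in>K. (cov x y)^2)"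
proof -
  have "measure_pmf.expectation sample (\<lambda>b. pair_stat b * pair_stat b)
     = (\<Sum>i\<in>I. \<Sum>j\<in>I - {i}. \<Sum>x\<in>K. \<Sum>k\<in>I. \<Sum>l\<in>I - {k}. \<Sum>y\<in>K.
          measure_pmf.expectation sample (\<lambda>b.
            (centered (b i) x * centered (b j) x) * (centered (b k) y * centered (b l) y)))"
    unfolding pair_stat_def sum_distrib_right
    unfolding sum_distrib_left by (simp add: Bochner_Integration.integral_sum)
  also have "\<dots> = (\<Sum>i\<in>I. \<Sum>j\<in>I - {i}. \<Sum>x\<in>K. \<Sum>k\<in>I. \<Sum>l\<in>I - {k}. \<Sum>y\<in>K.
          if {k, l} = {i, j} then (cov x y)^2 else 0)"
    by (intro sum.cong refl expectation_sample_centered_quadruple) auto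
  also have "\<dots> = (\<Sum>i\<in>I. \<Sum>j\<in>I - {i}. \<Sum>x\<in>K. 2 * (\<Sum>y\<in>K. (cov x y)^2))"
  proof (intro sum.cong refl)
    fix i j x
    assume "i \<in> I" "j \<in> I - {i}"
    then have "(\<Sum>k\<in>I. \<Sum>l\<in>I - {k}. if {k, l} = {i, j} then \<Sum>y\<in>K. (cov x y)^2 else 0)
        = 2 * (\<Sum>y\<in>K. (cov x y)^2)"
      using finite_I by (intro sum_off_diagonal_doubleton) auto
    moreover have "(\<Sum>y\<in>K. if P then (cov x y)^2 else 0) = (if P then \<Sum>y\<in>K. (cov x y)^2 else 0)"
      for P by simp
    ultimately show "(\<Sum>k\<in>I. \<Sum>l\<in>I - {k}. \<Sum>y\<in>K. if {k, l} = {i, j} then (cov x y)^2 else 0)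
        = 2 * (\<Sum>y\<in>K. (cov x y)^2)"
      by simp
  qed
  also have "\<dots> = 2 * real (card I) * (real (card I) - 1) * (\<Sum>x\<in>K. \<Sum>y\<in>K. (cov x y)^2)"
    by (simp only: sum_off_diagonal_const[OF finite_I] sum_distrib_left[symmetric])
  finally show ?thesis .
qed

lemma variance_affine_stat:
  "measure_pmf.variance sample (\<lambda>b. c * lin_stat \<mu> b + pair_stat b + d)
     = c^2 * real (card I) * (\<Sum>x\<in>K. \<Sum>y\<in>K. \<mu> x * \<mu> y * cov x y)
       + 2 * real (card I) * (real (card I) - 1) * (\<Sum>x\<in>K. \<Sum>y\<in>K. (cov x y)^2)"
proof -
  have "measure_pmf.expectation sample (\<lambda>b. c * lin_stat \<mu> b + pair_stat b + d) = d"
    by (simp add: expectation_lin_stat expectation_pair_stat)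
  moreover have "(\<lambda>b. (c * lin_stat \<mu> b + pair_stat b)^2) = (\<lambda>b. c^2 * (lin_stat \<mu> b * lin_stat \<mu> b)
      + ((2 * c) * (lin_stat \<mu> b * pair_stat b) + pair_stat b * pair_stat b))"
    by (auto simp: fun_eq_iff power2_eq_square algebra_simps)
  ultimately show ?thesis
    by (simp add: expectation_lin_stat_sq expectation_lin_pair_stat expectation_pair_stat_sq)
qed

end

section \<open>The RAPPOR statistic\<close>

lemma beta_R_pos: "0 < beta_R \<epsilon>"
  by (simp add: beta_R_def add_pos_pos)

lemma beta_R_le_1: "beta_R \<epsilon> \<le> 1"
  using add_pos_pos[OF exp_gt_zero[of "\<epsilon> / 2"] zero_less_one] by (simp add: beta_R_def)

lemma alpha_R_eq: "alpha_R \<epsilon> = 1 - 2 * beta_R \<epsilon>"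
proof -
  have "exp (\<epsilon> / 2) + 1 \<noteq> 0"
    using add_pos_pos[OF exp_gt_zero[of "\<epsilon> / 2"] zero_less_one] by simp
  then show ?thesis
    by (simp add: alpha_R_def beta_R_def field_simps)
qed

lemma alpha_R_nonneg: "0 \<le> \<epsilon> \<Longrightarrow> 0 \<le> alpha_R \<epsilon>"
  by (simp add: alpha_R_def)

lemma alpha_R_le_1: "alpha_R \<epsilon> \<le> 1"
  using beta_R_pos[of \<epsilon>] by (simp add: alpha_R_eq)

lemma alpha_R_sq_le_1: "0 \<le> \<epsilon> \<Longrightarrow> (alpha_R \<epsilon>)^2 \<le> 1"
  using alpha_R_nonneg alpha_R_le_1 by (simp add: power_le_one)

lemma finite_set_rappor: "finite (set_pmf (rappor \<epsilon> k z))"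
  unfolding rappor_def by (intro finite_set_Pi_pmf) auto

lemma expectation_rappor_bit:
  assumes "x \<in> {1..k}"
  shows "measure_pmf.expectation (rappor \<epsilon> k z) (\<lambda>u. of_bool (u x))
       = (if x = z then 1 - beta_R \<epsilon> else beta_R \<epsilon>)"
  unfolding rappor_def using assms beta_R_pos[of \<epsilon>] beta_R_le_1[of \<epsilon>]
  by (subst expectation_Pi_pmf_component[where f = of_bool]) auto

lemma expectation_rappor_bits:
  assumes "x \<in> {1..k}" "y \<in> {1..k}" "x \<noteq> y"
  shows "measure_pmf.expectation (rappor \<epsilon> k z) (\<lambda>u. of_bool (u x) * of_bool (u y))
       = (if x = z then 1 - beta_R \<epsilon> else beta_R \<epsilon>) * (if y = z then 1 - beta_R \<epsilon> else beta_R \<epsilon>)"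
  unfolding rappor_def
  using assms expectation_rappor_bit[OF assms(2), of \<epsilon> z] beta_R_pos[of \<epsilon>] beta_R_le_1[of \<epsilon>]
  by (subst expectation_Pi_pmf_mult_indep[where f = of_bool and F = "\<lambda>u. of_bool (u y)"])
    (auto simp: rappor_def expectation_Pi_pmf_component[where f = of_bool])

definition rappor_bit_prob :: "real \<Rightarrow> nat pmf \<Rightarrow> nat \<Rightarrow> real" where
  "rappor_bit_prob \<epsilon> p x = beta_R \<epsilon> + alpha_R \<epsilon> * pmf p x"

lemma rappor_bit_prob_bounds:
  assumes "0 \<le> \<epsilon>"
  shows "0 \<le> rappor_bit_prob \<epsilon> p x" "rappor_bit_prob \<epsilon> p x \<le> 1"
proof -
  have "alpha_R \<epsilon> * pmf p x \<le> alpha_R \<epsilon>"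
    using alpha_R_nonneg[OF assms] by (simp add: mult_left_le pmf_le_1)
  then show "rappor_bit_prob \<epsilon> p x \<le> 1"
    using beta_R_pos[of \<epsilon>] by (simp add: rappor_bit_prob_def alpha_R_eq)
  show "0 \<le> rappor_bit_prob \<epsilon> p x"
    using alpha_R_nonneg[OF assms] beta_R_pos[of \<epsilon>] by (simp add: rappor_bit_prob_def)
qed

lemma rappor_bit_prob_minus_lam_R:
  "rappor_bit_prob \<epsilon> p x - lam_R \<epsilon> k = alpha_R \<epsilon> * (pmf p x - 1 / real k)"
  by (simp add: rappor_bit_prob_def lam_R_def algebra_simps)

lemma finite_set_rappor_mixture:
  "set_pmf p \<subseteq> {1..k} \<Longrightarrow> finite (set_pmf (bind_pmf p (rappor \<epsilon> k)))"
  unfolding set_bind_pmf by (intro finite_UN_I finite_set_rappor) (auto intro: finite_subset)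

lemma expectation_rappor_mixture:
  fixes h :: "(nat \<Rightarrow> bool) \<Rightarrow> real"
  assumes "set_pmf p \<subseteq> {1..k}"
  shows "measure_pmf.expectation (bind_pmf p (rappor \<epsilon> k)) h
       = (\<Sum>z\<in>{1..k}. pmf p z * measure_pmf.expectation (rappor \<epsilon> k z) h)"
  using assms by (simp add: pmf_expectation_bind[of "{1..k}"] finite_set_rappor)

lemma expectation_rappor_mixture_bit:
  assumes "set_pmf p \<subseteq> {1..k}" "x \<in> {1..k}"
  shows "measure_pmf.expectation (bind_pmf p (rappor \<epsilon> k)) (\<lambda>u. of_bool (u x))
       = rappor_bit_prob \<epsilon> p x"
proof -
  have "measure_pmf.expectation (bind_pmf p (rappor \<epsilon> k)) (\<lambda>u. of_bool (u x))
      = (\<Sum>z\<in>{1..k}. pmf p z * beta_R \<epsilon> + (if z = x then alpha_R \<epsilon> * pmf p z else 0))"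
    using assms by (auto simp: expectation_rappor_mixture expectation_rappor_bit alpha_R_eq
        algebra_simps intro!: sum.cong)
  also have "\<dots> = rappor_bit_prob \<epsilon> p x"
    using assms sum_pmf_eq_1[of "{1..k}" p]
    by (simp add: sum.distrib sum_distrib_right[symmetric] rappor_bit_prob_def)
  finally show ?thesis .
qed

lemma expectation_rappor_mixture_bits:
  assumes "set_pmf p \<subseteq> {1..k}" "x \<in> {1..k}" "y \<in> {1..k}" "x \<noteq> y"
  shows "measure_pmf.expectation (bind_pmf p (rappor \<epsilon> k)) (\<lambda>u. of_bool (u x) * of_bool (u y))
       = (beta_R \<epsilon>)^2 + alpha_R \<epsilon> * beta_R \<epsilon> * (pmf p x + pmf p y)"
proof -
  have "measure_pmf.expectation (bind_pmf p (rappor \<epsilon> k)) (\<lambda>u. of_bool (u x) * of_bool (u y))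
      = (\<Sum>z\<in>{1..k}. pmf p z * (beta_R \<epsilon>)^2
          + (if z = x then alpha_R \<epsilon> * beta_R \<epsilon> * pmf p z else 0)
          + (if z = y then alpha_R \<epsilon> * beta_R \<epsilon> * pmf p z else 0))"
    using assms by (auto simp: expectation_rappor_mixture expectation_rappor_bits alpha_R_eq
        algebra_simps power2_eq_square intro!: sum.cong)
  also have "\<dots> = (beta_R \<epsilon>)^2 + alpha_R \<epsilon> * beta_R \<epsilon> * (pmf p x + pmf p y)"
    using assms sum_pmf_eq_1[of "{1..k}" p]
    by (simp add: sum.distrib sum_distrib_right[symmetric] algebra_simps)
  finally show ?thesis .
qed

definition rappor_cov :: "real \<Rightarrow> nat pmf \<Rightarrow> nat \<Rightarrow> nat \<Rightarrow> real" where
  "rappor_cov \<epsilon> p x y =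
     (if x = y then rappor_bit_prob \<epsilon> p x * (1 - rappor_bit_prob \<epsilon> p x)
      else - ((alpha_R \<epsilon>)^2 * pmf p x * pmf p y))"

lemma covariance_rappor_mixture_bits:
  fixes \<epsilon> :: real and p :: "nat pmf"
  assumes "set_pmf p \<subseteq> {1..k}" "x \<in> {1..k}" "y \<in> {1..k}"
  defines "q \<equiv> rappor_bit_prob \<epsilon> p"
  shows "measure_pmf.expectation (bind_pmf p (rappor \<epsilon> k))
           (\<lambda>u. (of_bool (u x) - q x) * (of_bool (u y) - q y))
       = rappor_cov \<epsilon> p x y"
proof -
  let ?E = "measure_pmf.expectation (bind_pmf p (rappor \<epsilon> k))"
  have int: "integrable (measure_pmf (bind_pmf p (rappor \<epsilon> k))) (h :: _ \<Rightarrow> real)" for h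
    using assms(1) by (intro integrable_measure_pmf_finite finite_set_rappor_mixture)
  have mean: "?E (\<lambda>u. of_bool (u z)) = q z" if "z \<in> {1..k}" for z
    using assms(1) that unfolding q_def by (rule expectation_rappor_mixture_bit)
  have "(\<lambda>u. (of_bool (u x) - q x) * (of_bool (u y) - q y))
      = (\<lambda>u. of_bool (u x) * of_bool (u y) - q y * of_bool (u x) - q x * of_bool (u y) + q x * q y)"
    by (auto simp: fun_eq_iff algebra_simps)
  then have decomp: "?E (\<lambda>u. (of_bool (u x) - q x) * (of_bool (u y) - q y))
      = ?E (\<lambda>u. of_bool (u x) * of_bool (u y)) - q x * q y"
    using assms(2,3) by (simp add: int mean)
  show ?thesis
  proof (cases "x = y")
    case True
    then show ?thesis
      using decomp mean[OF assms(2)] by (simp add: rappor_cov_def q_def algebra_simps flip: of_bool_conj)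
  next
    case False
    then show ?thesis
      using decomp assms
      by (simp add: expectation_rappor_mixture_bits rappor_cov_def q_def rappor_bit_prob_def
          alpha_R_eq power2_eq_square algebra_simps)
  qed
qed

lemma rappor_cov_quadratic_form_le:
  fixes \<mu> :: "nat \<Rightarrow> real"
  assumes "0 \<le> \<epsilon>" "finite K"
  shows "(\<Sum>x\<in>K. \<Sum>y\<in>K. \<mu> x * \<mu> y * rappor_cov \<epsilon> p x y) \<le> 2 * (\<Sum>x\<in>K. (\<mu> x)^2)"
proof -
  let ?q = "rappor_bit_prob \<epsilon> p" and ?\<alpha> = "alpha_R \<epsilon>"
  define d where "d x = ?q x * (1 - ?q x) + ?\<alpha>^2 * (pmf p x)^2" for x
  have "(\<Sum>x\<in>K. \<Sum>y\<in>K. \<mu> x * \<mu> y * rappor_cov \<epsilon> p x y)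
      = (\<Sum>x\<in>K. \<Sum>y\<in>K. (if x = y then (\<mu> x)^2 * d x else 0)
                         - ?\<alpha>^2 * ((\<mu> x * pmf p x) * (\<mu> y * pmf p y)))"
    by (intro sum.cong refl) (auto simp: rappor_cov_def d_def algebra_simps power2_eq_square)
  also have "\<dots> = (\<Sum>x\<in>K. (\<mu> x)^2 * d x) - ?\<alpha>^2 * (\<Sum>x\<in>K. \<mu> x * pmf p x)^2"
    using \<open>finite K\<close>
    by (simp add: sum_subtractf power2_eq_square sum_product sum_distrib_left[symmetric])
  also have "\<dots> \<le> (\<Sum>x\<in>K. (\<mu> x)^2 * 2)"
  proof -
    have "d x \<le> 2" for x
    proof -
      have "?q x * (1 - ?q x) \<le> 1"
        using rappor_bit_prob_bounds[OF assms(1)] by (simp add: mult_le_one)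
      moreover have "?\<alpha>^2 * (pmf p x)^2 \<le> 1"
        using alpha_R_sq_le_1[OF assms(1)] by (simp add: mult_le_one power_le_one pmf_le_1)
      ultimately show ?thesis
        by (simp add: d_def)
    qed
    then have "(\<Sum>x\<in>K. (\<mu> x)^2 * d x) \<le> (\<Sum>x\<in>K. (\<mu> x)^2 * 2)"
      by (intro sum_mono mult_left_mono) auto
    then show ?thesis
      by (smt (verit) zero_le_power2 mult_nonneg_nonneg)
  qed
  finally show ?thesis
    by (simp add: sum_distrib_left mult.commute)
qed

lemma rappor_cov_sq_le:
  assumes "0 \<le> \<epsilon>"
  shows "(rappor_cov \<epsilon> p x y)^2 \<le> of_bool (x = y) + pmf p x * pmf p y"
proof (cases "x = y")
  case True
  let ?q = "rappor_bit_prob \<epsilon> p x"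
  have "0 \<le> ?q * (1 - ?q)" "?q * (1 - ?q) \<le> 1"
    using rappor_bit_prob_bounds[OF assms] by (simp_all add: mult_le_one)
  then have "(?q * (1 - ?q))^2 \<le> 1"
    by (simp add: power_le_one)
  then show ?thesis
    using True by (simp add: rappor_cov_def add_increasing2)
next
  case False
  let ?w = "pmf p x * pmf p y"
  have w: "0 \<le> ?w" "?w \<le> 1"
    by (simp_all add: mult_le_one pmf_le_1)
  have "(rappor_cov \<epsilon> p x y)^2 = ((alpha_R \<epsilon>)^2)^2 * (?w * ?w)"
    using False by (simp add: rappor_cov_def power2_eq_square algebra_simps)
  also have "\<dots> \<le> 1 * ?w"
  proof (rule mult_mono)
    show "((alpha_R \<epsilon>)^2)^2 \<le> 1"
      using alpha_R_sq_le_1[OF assms] power_le_one[of "(alpha_R \<epsilon>)^2" 2] by simp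
    show "?w * ?w \<le> ?w"
      using w by (simp add: mult_left_le)
  qed (use w in auto)
  finally show ?thesis
    using False by simp
qed

lemma rappor_cov_sum_sq_le:
  assumes "0 \<le> \<epsilon>" "set_pmf p \<subseteq> {1..k}"
  shows "(\<Sum>x\<in>{1..k}. \<Sum>y\<in>{1..k}. (rappor_cov \<epsilon> p x y)^2) \<le> real k + 1"
proof -
  have "(\<Sum>x\<in>{1..k}. \<Sum>y\<in>{1..k}. (rappor_cov \<epsilon> p x y)^2)
      \<le> (\<Sum>x\<in>{1..k}. \<Sum>y\<in>{1..k}. of_bool (x = y) + pmf p x * pmf p y)"
    using assms(1) by (intro sum_mono rappor_cov_sq_le)
  also have "\<dots> = real k + (\<Sum>x\<in>{1..k}. pmf p x)^2"
    by (simp add: sum.distrib power2_eq_square sum_product)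
  finally show ?thesis
    using sum_pmf_eq_1[OF _ assms(2)] by simp
qed

lemma T_stat_expansion:
  fixes q :: "nat \<Rightarrow> real"
  shows "T_stat \<epsilon> k n b =
     2 * (real n - 1) * (\<Sum>i\<in>{1..n}. \<Sum>x\<in>{1..k}. (q x - lam_R \<epsilon> k) * (of_bool (b i x) - q x))
     + (\<Sum>i\<in>{1..n}. \<Sum>j\<in>{1..n} - {i}. \<Sum>x\<in>{1..k}. (of_bool (b i x) - q x) * (of_bool (b j x) - q x))
     + real n * (real n - 1) * (\<Sum>x\<in>{1..k}. (q x - lam_R \<epsilon> k)^2)"
proof -
  define l where "l = lam_R \<epsilon> k"
  have N: "N_count n b x = (\<Sum>i\<in>{1..n}. of_bool (b i x))" for x
    by (simp add: N_count_def Int_def)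
  have "T_stat \<epsilon> k n b
      = (\<Sum>x\<in>{1..k}. (N_count n b x - (real n - 1) * l)^2 - N_count n b x + (real n - 1) * l^2)"
    unfolding T_stat_def l_def by (simp add: sum.distrib)
  also have "\<dots> = (\<Sum>x\<in>{1..k}.
        2 * (real n - 1) * (q x - l) * (\<Sum>i\<in>{1..n}. of_bool (b i x) - q x)
       + (\<Sum>i\<in>{1..n}. \<Sum>j\<in>{1..n} - {i}. (of_bool (b i x) - q x) * (of_bool (b j x) - q x))
       + real n * (real n - 1) * (q x - l)^2)"
    unfolding N
    using indicator_sum_sq_expansion[of "{1..n}" "\<lambda>i. of_bool (b i _)"]
    by (intro sum.cong refl) simp
  also have "\<dots> = 2 * (real n - 1) * (\<Sum>i\<in>{1..n}. \<Sum>x\<in>{1..k}. (q x - l) * (of_bool (b i x) - q x))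
     + (\<Sum>i\<in>{1..n}. \<Sum>j\<in>{1..n} - {i}. \<Sum>x\<in>{1..k}. (of_bool (b i x) - q x) * (of_bool (b j x) - q x))
     + real n * (real n - 1) * (\<Sum>x\<in>{1..k}. (q x - l)^2)"
  proof -
    have "(\<Sum>x\<in>{1..k}. 2 * (real n - 1) * (q x - l) * (\<Sum>i\<in>{1..n}. of_bool (b i x) - q x))
       = 2 * (real n - 1) * (\<Sum>i\<in>{1..n}. \<Sum>x\<in>{1..k}. (q x - l) * (of_bool (b i x) - q x))"
      by (simp only: sum_distrib_left mult.assoc) (rule sum.swap)
    moreover have "(\<Sum>x\<in>{1..k}. \<Sum>i\<in>{1..n}. \<Sum>j\<in>{1..n} - {i}. (of_bool (b i x) - q x) * (of_bool (b j x) - q x))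
       = (\<Sum>i\<in>{1..n}. \<Sum>j\<in>{1..n} - {i}. \<Sum>x\<in>{1..k}. (of_bool (b i x) - q x) * (of_bool (b j x) - q x))"
      by (subst sum.swap) (rule sum.cong[OF refl], rule sum.swap)
    ultimately show ?thesis
      by (simp only: sum.distrib) (simp add: sum_distrib_left)
  qed
  finally show ?thesis
    unfolding l_def .
qed

lemma cubic_bound_of_moments:
  fixes W V S c :: real and n :: nat
  assumes "W \<le> 2 * S" "V \<le> 2 * c" "0 \<le> S" "0 \<le> c"
  shows "(2 * (real n - 1))^2 * real n * W + 2 * real n * (real n - 1) * V
       \<le> 4 * c * (real n)^2 + 8 * (real n)^3 * S"
proof (cases "n = 0")
  case False
  then have "1 \<le> real n" by simp
  then have "(2 * (real n - 1))^2 * real n * W \<le> (2 * (real n - 1))^2 * real n * (2 * S)"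
    using assms by (intro mult_left_mono) auto
  also have "\<dots> \<le> (2 * real n)^2 * real n * (2 * S)"
    using \<open>1 \<le> real n\<close> assms by (intro mult_right_mono power_mono) auto
  finally have "(2 * (real n - 1))^2 * real n * W \<le> 8 * (real n)^3 * S"
    by (simp add: power2_eq_square power3_eq_cube)
  moreover have "2 * real n * (real n - 1) * V \<le> 2 * real n * (real n - 1) * (2 * c)"
    using assms \<open>1 \<le> real n\<close> by (intro mult_left_mono) auto
  moreover have "2 * real n * (real n - 1) * (2 * c) \<le> 4 * c * (real n)^2"
    using assms by (simp add: power2_eq_square algebra_simps)
  ultimately show ?thesis
    by linarith
qed simp

lemma variance_T_stat:
  fixes \<epsilon> :: real and k :: nat and p :: "nat pmf"
  assumes "set_pmf p \<subseteq> {1..k}"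
  defines "\<mu> \<equiv> \<lambda>x. alpha_R \<epsilon> * (pmf p x - 1 / real k)"
  shows "measure_pmf.variance (rappor_outputs \<epsilon> k n p) (T_stat \<epsilon> k n)
       = (2 * (real n - 1))^2 * real n * (\<Sum>x\<in>{1..k}. \<Sum>y\<in>{1..k}. \<mu> x * \<mu> y * rappor_cov \<epsilon> p x y)
         + 2 * real n * (real n - 1) * (\<Sum>x\<in>{1..k}. \<Sum>y\<in>{1..k}. (rappor_cov \<epsilon> p x y)^2)"
proof -
  interpret iid_features "bind_pmf p (rappor \<epsilon> k)" "{1..n}" "\<lambda>_. False" "{1..k}"
    "\<lambda>u x. of_bool (u x)"
    using finite_set_rappor_mixture[OF assms(1)] by unfold_locales auto
  define \<nu> where "\<nu> x = mean x - lam_R \<epsilon> k" for x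
  have mean: "mean x = rappor_bit_prob \<epsilon> p x" if "x \<in> {1..k}" for x
    using assms(1) that unfolding mean_def by (rule expectation_rappor_mixture_bit)
  have cov: "cov x y = rappor_cov \<epsilon> p x y" if "x \<in> {1..k}" "y \<in> {1..k}" for x y
    using covariance_rappor_mixture_bits[OF assms(1) that] that
    by (simp add: cov_def centered_def mean)
  have "T_stat \<epsilon> k n = (\<lambda>b. 2 * (real n - 1) * lin_stat \<nu> b + pair_stat b
                              + real n * (real n - 1) * (\<Sum>x\<in>{1..k}. (\<nu> x)^2))"
    unfolding lin_stat_def pair_stat_def centered_def \<nu>_def
    by (rule ext) (simp add: T_stat_expansion[where q = mean])
  then have "measure_pmf.variance (rappor_outputs \<epsilon> k n p) (T_stat \<epsilon> k n)
      = (2 * (real n - 1))^2 * real n * (\<Sum>x\<in>{1..k}. \<Sum>y\<in>{1..k}. \<nu> x * \<nu> y * cov x y)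
        + 2 * real n * (real n - 1) * (\<Sum>x\<in>{1..k}. \<Sum>y\<in>{1..k}. (cov x y)^2)"
    unfolding rappor_outputs_def by (simp only: variance_affine_stat) simp
  then show ?thesis
    by (simp add: \<nu>_def \<mu>_def mean cov rappor_bit_prob_minus_lam_R)
qed

theorem lemma3p3:
  fixes \<epsilon> :: real and k n :: nat and p :: "nat pmf"
  assumes "\<epsilon> > 0" and "k \<ge> 1" and "set_pmf p \<subseteq> {1..k}"
  shows "measure_pmf.variance (rappor_outputs \<epsilon> k n p) (T_stat \<epsilon> k n)
           \<le> 4 * real k * (real n)^2
             + 8 * (real n)^3 * (alpha_R \<epsilon>)^2 * (\<Sum>x\<in>{1..k}. (pmf p x - 1 / real k)^2)"
proof -
  let ?\<mu> = "\<lambda>x. alpha_R \<epsilon> * (pmf p x - 1 / real k)"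
  have "(\<Sum>x\<in>{1..k}. \<Sum>y\<in>{1..k}. ?\<mu> x * ?\<mu> y * rappor_cov \<epsilon> p x y) \<le> 2 * (\<Sum>x\<in>{1..k}. (?\<mu> x)^2)"
    using assms(1) by (intro rappor_cov_quadratic_form_le) auto
  moreover have "(\<Sum>x\<in>{1..k}. \<Sum>y\<in>{1..k}. (rappor_cov \<epsilon> p x y)^2) \<le> 2 * real k"
    using rappor_cov_sum_sq_le[of \<epsilon> p k] assms by simp
  ultimately have "measure_pmf.variance (rappor_outputs \<epsilon> k n p) (T_stat \<epsilon> k n)
      \<le> 4 * real k * (real n)^2 + 8 * (real n)^3 * (\<Sum>x\<in>{1..k}. (?\<mu> x)^2)"
    unfolding variance_T_stat[OF assms(3)] by (intro cubic_bound_of_moments) (auto simp: sum_nonneg)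
  then show ?thesis
    by (simp add: power_mult_distrib sum_distrib_left mult.assoc)
qed

end
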